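(* Let $f\in\mathcal{F}$, let $A$ be a finite subset of $\mathbb{C}$ and let $b\in\mathbb{C}$. Assume that $A\subset f^{-1}(E)$ or $b\in\mathbb{C}\setminus A^{\mathrm{sym}}$. Then for every $\varepsilon>0$ there exists $g\in\mathcal{F}(f,A)$ such that $d_{\mathcal{F}}(f,g)<\varepsilon$ and $g(b)\in E$.
   Context: $\mathcal{F}$ is a Fréchet space of real and even entire maps (i.e. $f(\bar z)=\overline{f(z)}$ and $f(-z)=f(z)$) containing all real and even polynomial maps, whose topology is finer than the topology of local uniform convergence on $\mathbb{C}$; $(\|\cdot\|_j)_{j\ge0}$ is a sequence of seminorms defining its topology and $d_{\mathcal{F}}(f,g)=\sum_{j\ge0}2^{-j}\min\{1,\|f-g\|_j\}$. $E$ is a countable dense subset of $\mathbb{C}$, symmetric with respect to the real and imaginary axes, with $E\cap(\mathbb{R}\cup i\mathbb{R})$ dense in $\mathbb{R}\cup i\mathbb{R}$. For $f\in\mathcal{F}$ and $A\subseteq\mathbb{C}$, $\mathcal{F}(f,A)=\{g\in\mathcal{F}: g|_A=f|_A\text{ and } g'|_A=f'|_A\}$. For $A\subseteq\mathbb{C}$, $A^{\mathrm{sym}}=A\cup\bar A\cup(-A)\cup(-\bar A)$, where $\bar A$ is the complex conjugate of $A$. *)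

theory Defs
  imports "HOL-Analysis.Analysis"
begin

definition dF :: "(nat \<Rightarrow> (complex \<Rightarrow> complex) \<Rightarrow> real) \<Rightarrow> (complex \<Rightarrow> complex) \<Rightarrow> (complex \<Rightarrow> complex) \<Rightarrow> real" where
  "dF sn f g = (\<Sum>j. (1/2)^j * min 1 (sn j (\<lambda>z. f z - g z)))"

definition admissible_space :: "(complex \<Rightarrow> complex) set \<Rightarrow> (nat \<Rightarrow> (complex \<Rightarrow> complex) \<Rightarrow> real) \<Rightarrow> bool" where
  "admissible_space F sn \<longleftrightarrow>
     \<comment> \<open>elements are real and even entire maps\<close>
     (\<forall>f\<in>F. f holomorphic_on UNIV \<and> (\<forall>z. f (cnj z) = cnj (f z)) \<and> (\<forall>z. f (- z) = f z)) \<and>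
     \<comment> \<open>real vector space\<close>
     (\<forall>f\<in>F. \<forall>g\<in>F. (\<lambda>z. f z + g z) \<in> F) \<and>
     (\<forall>f\<in>F. \<forall>c::real. (\<lambda>z. complex_of_real c * f z) \<in> F) \<and>
     \<comment> \<open>contains all real and even polynomial maps\<close>
     (\<forall>(n::nat) (a::nat \<Rightarrow> real). (\<lambda>z. \<Sum>k\<le>n. complex_of_real (a k) * z ^ (2*k)) \<in> F) \<and>
     \<comment> \<open>each sn j is a seminorm on F\<close>
     (\<forall>j. \<forall>f\<in>F. sn j f \<ge> 0) \<and>
     (\<forall>j. \<forall>f\<in>F. \<forall>g\<in>F. sn j (\<lambda>z. f z + g z) \<le> sn j f + sn j g) \<and>
     (\<forall>j. \<forall>f\<in>F. \<forall>c::real. sn j (\<lambda>z. complex_of_real c * f z) = \<bar>c\<bar> * sn j f) \<and>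
     \<comment> \<open>Hausdorff\<close>
     (\<forall>f\<in>F. (\<forall>j. sn j f = 0) \<longrightarrow> f = (\<lambda>z. 0)) \<and>
     \<comment> \<open>complete\<close>
     (\<forall>u::nat \<Rightarrow> complex \<Rightarrow> complex. (\<forall>n. u n \<in> F) \<and>
        (\<forall>e>0. \<exists>N. \<forall>m\<ge>N. \<forall>n\<ge>N. dF sn (u m) (u n) < e) \<longrightarrow>
        (\<exists>g\<in>F. (\<lambda>n. dF sn (u n) g) \<longlonglongrightarrow> 0)) \<and>
     \<comment> \<open>topology finer than that of local uniform convergence on C\<close>
     (\<forall>K. compact K \<longrightarrow> (\<forall>e>0. \<exists>\<delta>>0. \<forall>f\<in>F. \<forall>g\<in>F.
        dF sn f g < \<delta> \<longrightarrow> (\<forall>z\<in>K. cmod (f z - g z) < e)))"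

definition admissible_E :: "complex set \<Rightarrow> bool" where
  "admissible_E E \<longleftrightarrow> countable E \<and> closure E = UNIV \<and>
     (\<forall>z\<in>E. cnj z \<in> E \<and> - z \<in> E) \<and>
     (\<real> \<union> (\<lambda>y. \<i> * y) ` \<real>) \<subseteq> closure (E \<inter> (\<real> \<union> (\<lambda>y. \<i> * y) ` \<real>))"

definition Fset :: "(complex \<Rightarrow> complex) set \<Rightarrow> (complex \<Rightarrow> complex) \<Rightarrow> complex set \<Rightarrow> (complex \<Rightarrow> complex) set" where
  "Fset F f A = {g \<in> F. \<forall>a\<in>A. g a = f a \<and> deriv g a = deriv f a}"

definition sym_set :: "complex set \<Rightarrow> complex set" where
  "sym_set A = A \<union> cnj ` A \<union> uminus ` A \<union> (\<lambda>z. - cnj z) ` A"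

end

theory Submission
  imports Defs "HOL-Computational_Algebra.Polynomial"
begin

(* If b lies in the symmetrisation of A, the hypothesis gives A <= f^-1(E), and the symmetries
   of f and of E give f(b) in E, so g = f works. Otherwise let h be the real even polynomial
   whose zero set is exactly the symmetrisation of A. The maps g = f + c1 h^2 + c2 z^2 h^2 with
   real c1, c2 agree with f to first order on A, are d_F-close to f for small c1, c2, and satisfy
   g(b) = f(b) + (c1 + c2 b^2) h(b)^2 with h(b) /= 0. If b lies on neither axis, b^2 is not real,
   so c1 + c2 b^2 covers a neighbourhood of 0 and density of E gives g(b) in E. If b lies on an
   axis, f(b) and h(b)^2 are real and the density of E on the real axis suffices. *)

lemma
  assumes "admissible_space F sn"
  shows admissible_space_holomorphic: "f \<in> F \<Longrightarrow> f holomorphic_on UNIV"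
    and admissible_space_cnj: "f \<in> F \<Longrightarrow> f (cnj z) = cnj (f z)"
    and admissible_space_even: "f \<in> F \<Longrightarrow> f (- z) = f z"
    and admissible_space_add: "f \<in> F \<Longrightarrow> g \<in> F \<Longrightarrow> (\<lambda>z. f z + g z) \<in> F"
    and admissible_space_scale: "f \<in> F \<Longrightarrow> (\<lambda>z. complex_of_real c * f z) \<in> F"
    and admissible_space_even_poly: "(\<lambda>z. \<Sum>k\<le>n. complex_of_real (a k) * z ^ (2*k)) \<in> F"
    and seminorm_nonneg: "f \<in> F \<Longrightarrow> sn j f \<ge> 0"
    and seminorm_triangle: "f \<in> F \<Longrightarrow> g \<in> F \<Longrightarrow> sn j (\<lambda>z. f z + g z) \<le> sn j f + sn j g"
    and seminorm_scale: "f \<in> F \<Longrightarrow> sn j (\<lambda>z. complex_of_real c * f z) = \<bar>c\<bar> * sn j f"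
  using assms unfolding admissible_space_def by (elim conjE; simp)+

lemma admissible_space_real_on_axes:
  assumes "admissible_space F sn" "q \<in> F" "Re b = 0 \<or> Im b = 0"
  shows "Im (q b) = 0"
proof -
  have "cnj b = b \<or> cnj b = - b"
    using assms(3) by (auto simp: complex_eq_iff)
  then have "cnj (q b) = q b"
    using admissible_space_cnj[OF assms(1,2), of b] admissible_space_even[OF assms(1,2), of b] by auto
  then show ?thesis
    by (simp add: complex_eq_iff)
qed

lemma sym_set_subset_preimage:
  assumes "admissible_space F sn" "admissible_E E" "f \<in> F" "A \<subseteq> f -` E"
  shows "sym_set A \<subseteq> f -` E"
proof -
  have "cnj z \<in> E \<and> - z \<in> E" if "z \<in> E" for z
    using assms(2) that unfolding admissible_E_def by blast
  then show ?thesis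
    using assms(4) admissible_space_cnj[OF assms(1,3)] admissible_space_even[OF assms(1,3)]
    unfolding sym_set_def by auto
qed

lemma map_poly_of_real_mult:
  "map_poly (of_real :: real \<Rightarrow> 'a::{comm_ring_1, real_algebra_1}) (p * q) =
     map_poly of_real p * map_poly of_real q"
  by (simp add: poly_eq_iff coeff_mult coeff_map_poly)

lemma map_poly_of_real_prod:
  "map_poly (of_real :: real \<Rightarrow> 'a::{comm_ring_1, real_algebra_1}) (\<Prod>i\<in>S. p i) =
     (\<Prod>i\<in>S. map_poly of_real (p i))"
  by (induction S rule: infinite_finite_induct) (auto simp: map_poly_of_real_mult)

lemma admissible_space_even_real_poly:
  assumes "admissible_space F sn"
  shows "(\<lambda>z. poly (map_poly of_real r) (z^2)) \<in> F"
proof -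
  have "(\<lambda>z. poly (map_poly of_real r) (z^2)) =
        (\<lambda>z. \<Sum>k\<le>degree r. complex_of_real (coeff r k) * z ^ (2*k))"
    by (simp add: poly_altdef degree_map_poly coeff_map_poly power_mult)
  then show ?thesis
    using admissible_space_even_poly[OF assms] by simp
qed

definition sym_annihilator :: "complex set \<Rightarrow> real poly" where
  "sym_annihilator A = (\<Prod>a\<in>A. [:cmod (a^2) ^ 2, - 2 * Re (a^2), 1:])"

lemma poly_of_real_conj_pair:
  "poly (map_poly of_real [:cmod \<alpha> ^ 2, - 2 * Re \<alpha>, 1:]) w = (w - \<alpha>) * (w - cnj \<alpha>)"
proof -
  have "complex_of_real (cmod \<alpha> ^ 2) = \<alpha> * cnj \<alpha>"
    using complex_norm_square[of \<alpha>] by simp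
  moreover have "complex_of_real (2 * Re \<alpha>) = \<alpha> + cnj \<alpha>"
    by (simp add: complex_add_cnj)
  ultimately show ?thesis
    by (simp add: map_poly_pCons algebra_simps)
qed

lemma poly_sym_annihilator:
  "poly (map_poly of_real (sym_annihilator A)) w = (\<Prod>a\<in>A. (w - a^2) * (w - cnj a ^ 2))"
  by (simp only: sym_annihilator_def map_poly_of_real_prod poly_prod poly_of_real_conj_pair
      complex_cnj_power)

lemma poly_sym_annihilator_square_eq_0_iff:
  assumes "finite A"
  shows "poly (map_poly of_real (sym_annihilator A)) (z^2) = 0 \<longleftrightarrow> z \<in> sym_set A"
proof -
  have "z^2 = a^2 \<or> z^2 = cnj a ^ 2 \<longleftrightarrow> z = a \<or> z = - a \<or> z = cnj a \<or> z = - cnj a" for a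
    by (auto simp: power2_eq_iff)
  then show ?thesis
    using assms by (auto simp: poly_sym_annihilator sym_set_def image_iff)
qed

lemma deriv_add_square_mult:
  assumes "f field_differentiable at a" "h field_differentiable at a" "k field_differentiable at a"
    and "h a = 0"
  shows "deriv (\<lambda>z. f z + h z ^ 2 * k z) a = deriv f a"
proof -
  have "((\<lambda>z. f z + h z ^ 2 * k z) has_field_derivative deriv f a) (at a)"
    using assms(1-3)[THEN field_differentiable_derivI]
    by (auto intro!: derivative_eq_intros simp: assms(4))
  then show ?thesis
    by (rule DERIV_imp_deriv)
qed

lemma perturbation_in_Fset:
  assumes adm: "admissible_space F sn" and "f \<in> F"
    and p1: "(\<lambda>z. h z ^ 2) \<in> F" and p2: "(\<lambda>z. z^2 * h z ^ 2) \<in> F"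
    and "h holomorphic_on UNIV" and "\<forall>a\<in>A. h a = 0"
  shows "(\<lambda>z. f z + of_real c1 * h z ^ 2 + of_real c2 * (z^2 * h z ^ 2)) \<in> Fset F f A"
proof -
  let ?g = "\<lambda>z. f z + of_real c1 * h z ^ 2 + of_real c2 * (z^2 * h z ^ 2)"
  have "?g \<in> F"
    using admissible_space_add[OF adm admissible_space_add[OF adm \<open>f \<in> F\<close>]]
      admissible_space_scale[OF adm p1] admissible_space_scale[OF adm p2] by blast
  moreover have "deriv ?g a = deriv f a" if "a \<in> A" for a
  proof -
    have "?g = (\<lambda>z. f z + h z ^ 2 * (of_real c1 + of_real c2 * z^2))"
      by (simp add: algebra_simps)
    moreover have "(\<lambda>z. of_real c1 + of_real c2 * z^2) holomorphic_on UNIV"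
      by (intro holomorphic_intros)
    ultimately show ?thesis
      using admissible_space_holomorphic[OF adm \<open>f \<in> F\<close>] \<open>h holomorphic_on UNIV\<close>
        \<open>\<forall>a\<in>A. h a = 0\<close> that
      by (auto intro!: deriv_add_square_mult holomorphic_on_imp_differentiable_at)
  qed
  ultimately show ?thesis
    using \<open>\<forall>a\<in>A. h a = 0\<close> by (simp add: Fset_def)
qed

lemma suminf_halves_min_le:
  fixes x :: "nat \<Rightarrow> real"
  assumes "\<And>j. 0 \<le> x j"
  shows "(\<Sum>j. (1/2)^j * min 1 (x j)) \<le> (\<Sum>j<N. x j) + 2 * (1/2)^N"
proof -
  define t where "t j = (1/2::real)^j * min 1 (x j)" for j
  have t_bound: "0 \<le> t j" "t j \<le> (1/2)^j" for j
    using assms by (simp_all add: t_def)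
  have "summable t"
    by (rule summable_comparison_test[of _ "\<lambda>j. (1/2::real)^j"]) (use t_bound in auto)
  then have "suminf t = (\<Sum>j. t (j + N)) + (\<Sum>j<N. t j)"
    by (rule suminf_split_initial_segment)
  also have "(\<Sum>j. t (j + N)) \<le> (\<Sum>j. (1/2::real)^N * (1/2)^j)"
  proof (rule suminf_le)
    show "t (j + N) \<le> (1/2)^N * (1/2)^j" for j
      using t_bound(2)[of "j + N"] by (simp add: power_add mult.commute)
    show "summable (\<lambda>j. t (j + N))"
      using \<open>summable t\<close> by (simp add: summable_iff_shift)
    show "summable (\<lambda>j. (1/2::real)^N * (1/2)^j)"
      by (intro summable_mult summable_geometric) simp
  qed
  also have "(\<Sum>j. (1/2::real)^N * (1/2)^j) = 2 * (1/2)^N"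
    using suminf_mult[OF summable_geometric[of "1/2::real"]] suminf_geometric[of "1/2::real"] by simp
  also have "(\<Sum>j<N. t j) \<le> (\<Sum>j<N. x j)"
  proof (rule sum_mono)
    fix j
    have "(1/2::real)^j * min 1 (x j) \<le> min 1 (x j)"
      using assms[of j] by (intro mult_left_le_one_le) (auto simp: power_le_one)
    then show "t j \<le> x j"
      unfolding t_def by linarith
  qed
  finally show ?thesis
    unfolding t_def by simp
qed

lemma dF_self:
  assumes "admissible_space F sn" "f \<in> F"
  shows "dF sn f f = 0"
proof -
  have "sn j (\<lambda>z. f z - f z) = 0" for j
    using seminorm_scale[OF assms, of j 0] by simp
  then show ?thesis
    by (simp add: dF_def)
qed

lemma dF_perturbation_small:
  assumes adm: "admissible_space F sn" and "f \<in> F" and p1: "p1 \<in> F" and p2: "p2 \<in> F"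
    and "\<epsilon> > 0"
  obtains \<delta> where "\<delta> > 0"
    and "\<And>c1 c2. \<bar>c1\<bar> < \<delta> \<Longrightarrow> \<bar>c2\<bar> < \<delta> \<Longrightarrow>
           dF sn f (\<lambda>z. f z + of_real c1 * p1 z + of_real c2 * p2 z) < \<epsilon>"
proof -
  obtain N where N: "(1/2::real)^N < \<epsilon>/4"
    using real_arch_pow_inv[of "\<epsilon>/4" "1/2::real"] \<open>\<epsilon> > 0\<close> by auto
  define S where "S = (\<Sum>j<N. sn j p1 + sn j p2)"
  have "S \<ge> 0"
    unfolding S_def by (intro sum_nonneg add_nonneg_nonneg seminorm_nonneg[OF adm] p1 p2)
  define \<delta> where "\<delta> = \<epsilon> / (2 * (S + 1))"
  have "\<delta> > 0" "\<delta> * S < \<epsilon>/2"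
    using \<open>\<epsilon> > 0\<close> \<open>S \<ge> 0\<close> by (simp_all add: \<delta>_def field_simps)
  moreover have "dF sn f (\<lambda>z. f z + of_real c1 * p1 z + of_real c2 * p2 z) < \<epsilon>"
    if "\<bar>c1\<bar> < \<delta>" "\<bar>c2\<bar> < \<delta>" for c1 c2
  proof -
    define d where "d = (\<lambda>z. of_real (- c1) * p1 z + of_real (- c2) * p2 z)"
    have "d \<in> F"
      unfolding d_def by (intro admissible_space_add[OF adm] admissible_space_scale[OF adm] p1 p2)
    have d_bound: "sn j d \<le> \<delta> * (sn j p1 + sn j p2)" for j
    proof -
      have "sn j d \<le> sn j (\<lambda>z. of_real (- c1) * p1 z) + sn j (\<lambda>z. of_real (- c2) * p2 z)"
        unfolding d_def
        by (rule seminorm_triangle[OF adm admissible_space_scale[OF adm p1] admissible_space_scale[OF adm p2]])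
      also have "\<dots> = \<bar>c1\<bar> * sn j p1 + \<bar>c2\<bar> * sn j p2"
        by (simp only: seminorm_scale[OF adm p1] seminorm_scale[OF adm p2] abs_minus_cancel)
      also have "\<dots> \<le> \<delta> * sn j p1 + \<delta> * sn j p2"
        using that seminorm_nonneg[OF adm p1, of j] seminorm_nonneg[OF adm p2, of j]
        by (intro add_mono mult_right_mono) auto
      finally show ?thesis
        by (simp add: algebra_simps)
    qed
    have "dF sn f (\<lambda>z. f z + of_real c1 * p1 z + of_real c2 * p2 z) = (\<Sum>j. (1/2)^j * min 1 (sn j d))"
      by (simp add: dF_def d_def)
    also have "\<dots> \<le> (\<Sum>j<N. sn j d) + 2 * (1/2)^N"
      by (rule suminf_halves_min_le) (rule seminorm_nonneg[OF adm \<open>d \<in> F\<close>])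
    also have "(\<Sum>j<N. sn j d) \<le> \<delta> * S"
      unfolding S_def sum_distrib_left by (rule sum_mono) (rule d_bound)
    finally show ?thesis
      using \<open>\<delta> * S < \<epsilon>/2\<close> N by linarith
  qed
  ultimately show ?thesis
    using that by blast
qed

lemma admissible_E_real_dense:
  assumes "admissible_E E" "e > 0"
  shows "\<exists>y\<in>E. Im y = 0 \<and> \<bar>Re y - x\<bar> < e"
proof -
  \<comment> \<open>t is pushed away from 0, so a point of E near t on the axes cannot be purely imaginary\<close>
  define t where "t = (if x \<ge> 0 then x + e/2 else x - e/2)"
  have t: "\<bar>t - x\<bar> = e/2" "e/2 \<le> \<bar>t\<bar>"
    using \<open>e > 0\<close> by (auto simp: t_def)
  have "complex_of_real t \<in> closure (E \<inter> (\<real> \<union> (\<lambda>y. \<i> * y) ` \<real>))"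
    using assms(1) unfolding admissible_E_def by auto
  then obtain y where y: "y \<in> E" "y \<in> \<real> \<union> (\<lambda>y. \<i> * y) ` \<real>" "dist y (of_real t) < e/2"
    using \<open>e > 0\<close> unfolding closure_approachable by (metis IntD1 IntD2 half_gt_zero)
  have Re_y: "\<bar>Re y - t\<bar> < e/2"
    using y(3) abs_Re_le_cmod[of "y - of_real t"] by (simp add: dist_norm)
  have "y \<in> \<real>"
  proof (rule ccontr)
    assume "y \<notin> \<real>"
    then have "Re y = 0"
      using y(2) by (auto elim!: Reals_cases)
    then show False
      using Re_y t(2) by linarith
  qed
  moreover have "\<bar>Re y - x\<bar> < e"
    using Re_y t(1) by arith
  ultimately show ?thesis
    using y(1) by (auto simp: complex_is_Real_iff)
qed

lemma real_coordinates_bounded: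
  assumes "Im \<beta> \<noteq> 0"
  shows "\<exists>K>0. \<forall>w. \<exists>c1 c2. of_real c1 + of_real c2 * \<beta> = w \<and> \<bar>c1\<bar> \<le> K * cmod w \<and> \<bar>c2\<bar> \<le> K * cmod w"
proof (rule exI[of _ "(1 + \<bar>Re \<beta>\<bar> + \<bar>Im \<beta>\<bar>) / \<bar>Im \<beta>\<bar>"], intro conjI allI)
  show "(1 + \<bar>Re \<beta>\<bar> + \<bar>Im \<beta>\<bar>) / \<bar>Im \<beta>\<bar> > 0"
    using assms by simp
  fix w
  define m where "m = cmod w / \<bar>Im \<beta>\<bar>"
  define c2 where "c2 = Im w / Im \<beta>"
  define c1 where "c1 = Re w - c2 * Re \<beta>"
  have "m \<ge> 0" "cmod w = m * \<bar>Im \<beta>\<bar>"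
    using assms by (simp_all add: m_def)
  have "\<bar>c2\<bar> \<le> m"
    using abs_Im_le_cmod[of w] by (simp add: c2_def m_def abs_divide divide_right_mono)
  then have "\<bar>c2\<bar> * \<bar>Re \<beta>\<bar> \<le> m * \<bar>Re \<beta>\<bar>"
    by (rule mult_right_mono) simp
  then have "\<bar>c1\<bar> \<le> m * \<bar>Im \<beta>\<bar> + m * \<bar>Re \<beta>\<bar>"
    using abs_Re_le_cmod[of w] \<open>cmod w = m * \<bar>Im \<beta>\<bar>\<close> abs_mult[of c2 "Re \<beta>"]
    unfolding c1_def by linarith
  moreover have "(1 + \<bar>Re \<beta>\<bar> + \<bar>Im \<beta>\<bar>) / \<bar>Im \<beta>\<bar> * cmod w = m + m * \<bar>Re \<beta>\<bar> + m * \<bar>Im \<beta>\<bar>"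
    using assms by (simp add: m_def field_simps)
  moreover have "0 \<le> m * \<bar>Re \<beta>\<bar>" "0 \<le> m * \<bar>Im \<beta>\<bar>"
    using \<open>m \<ge> 0\<close> by simp_all
  ultimately have "\<bar>c1\<bar> \<le> (1 + \<bar>Re \<beta>\<bar> + \<bar>Im \<beta>\<bar>) / \<bar>Im \<beta>\<bar> * cmod w"
    and "\<bar>c2\<bar> \<le> (1 + \<bar>Re \<beta>\<bar> + \<bar>Im \<beta>\<bar>) / \<bar>Im \<beta>\<bar> * cmod w"
    using \<open>\<bar>c2\<bar> \<le> m\<close> by linarith+
  moreover have "of_real c1 + of_real c2 * \<beta> = w"
    using assms by (simp add: complex_eq_iff c1_def c2_def)
  ultimately show "\<exists>c1 c2. of_real c1 + of_real c2 * \<beta> = w \<and>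
      \<bar>c1\<bar> \<le> (1 + \<bar>Re \<beta>\<bar> + \<bar>Im \<beta>\<bar>) / \<bar>Im \<beta>\<bar> * cmod w \<and>
      \<bar>c2\<bar> \<le> (1 + \<bar>Re \<beta>\<bar> + \<bar>Im \<beta>\<bar>) / \<bar>Im \<beta>\<bar> * cmod w"
    by blast
qed

lemma exists_small_coefficients_in_E:
  assumes "admissible_E E" "H \<noteq> 0" "\<delta> > 0"
    and "Re b = 0 \<or> Im b = 0 \<Longrightarrow> Im u = 0 \<and> Im H = 0"
  shows "\<exists>c1 c2. \<bar>c1\<bar> < \<delta> \<and> \<bar>c2\<bar> < \<delta> \<and> u + (of_real c1 + of_real c2 * b^2) * H \<in> E"
proof (cases "Re b = 0 \<or> Im b = 0")
  case True
  then have "Im u = 0" "Im H = 0"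
    using assms(4) by auto
  then have "Re H \<noteq> 0"
    using \<open>H \<noteq> 0\<close> by (simp add: complex_eq_iff)
  then have "\<delta> * \<bar>Re H\<bar> > 0"
    using \<open>\<delta> > 0\<close> by simp
  then obtain y where "y \<in> E" "Im y = 0" "\<bar>Re y - Re u\<bar> < \<delta> * \<bar>Re H\<bar>"
    using admissible_E_real_dense[OF assms(1)] by blast
  define c1 where "c1 = (Re y - Re u) / Re H"
  have "\<bar>c1\<bar> < \<delta>"
    using \<open>\<bar>Re y - Re u\<bar> < \<delta> * \<bar>Re H\<bar>\<close> \<open>Re H \<noteq> 0\<close>
    by (simp add: c1_def abs_divide divide_less_eq)
  moreover have "u + (of_real c1 + of_real 0 * b^2) * H = y"
    using \<open>Im u = 0\<close> \<open>Im H = 0\<close> \<open>Im y = 0\<close> \<open>Re H \<noteq> 0\<close> by (simp add: complex_eq_iff c1_def)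
  ultimately show ?thesis
    using \<open>y \<in> E\<close> \<open>\<delta> > 0\<close> by (metis abs_zero)
next
  case False
  then have "Im (b^2) \<noteq> 0"
    by (simp add: power2_eq_square)
  then obtain K where "K > 0" and K: "\<And>w. \<exists>c1 c2. of_real c1 + of_real c2 * b^2 = w \<and>
      \<bar>c1\<bar> \<le> K * cmod w \<and> \<bar>c2\<bar> \<le> K * cmod w"
    using real_coordinates_bounded by blast
  have "closure E = UNIV"
    using assms(1) by (simp add: admissible_E_def)
  moreover have "\<delta> * cmod H / K > 0"
    using \<open>K > 0\<close> \<open>\<delta> > 0\<close> \<open>H \<noteq> 0\<close> by simp
  ultimately obtain y where "y \<in> E" "dist y u < \<delta> * cmod H / K"
    using closure_approachable[of u E] by blast
  then have "K * cmod ((y - u) / H) < \<delta>"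
    using \<open>K > 0\<close> \<open>H \<noteq> 0\<close> by (simp add: dist_norm norm_divide field_simps)
  moreover obtain c1 c2 where "of_real c1 + of_real c2 * b^2 = (y - u) / H"
    and "\<bar>c1\<bar> \<le> K * cmod ((y - u) / H)" "\<bar>c2\<bar> \<le> K * cmod ((y - u) / H)"
    using K by blast
  ultimately show ?thesis
    using \<open>y \<in> E\<close> \<open>H \<noteq> 0\<close> by (intro exI[of _ c1] exI[of _ c2]) auto
qed

lemma admissible_space_sym_annihilator:
  fixes A :: "complex set" and h :: "complex \<Rightarrow> complex"
  defines "h \<equiv> \<lambda>z. poly (map_poly of_real (sym_annihilator A)) (z^2)"
  assumes "admissible_space F sn"
  shows "(\<lambda>z. h z ^ 2) \<in> F" and "(\<lambda>z. z^2 * h z ^ 2) \<in> F" and "h holomorphic_on UNIV"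
proof -
  let ?R = "sym_annihilator A"
  show "(\<lambda>z. h z ^ 2) \<in> F" "(\<lambda>z. z^2 * h z ^ 2) \<in> F"
    using admissible_space_even_real_poly[OF assms(2), of "?R * ?R"]
      admissible_space_even_real_poly[OF assms(2), of "[:0, 1:] * ?R * ?R"]
    by (simp_all add: h_def map_poly_of_real_mult map_poly_pCons power2_eq_square)
  show "h holomorphic_on UNIV"
    unfolding h_def by (intro holomorphic_intros)
qed

lemma exists_perturbation_off_sym_set:
  assumes adm: "admissible_space F sn" and "admissible_E E" and "f \<in> F" and "finite A"
    and "b \<notin> sym_set A" and "\<epsilon> > 0"
  shows "\<exists>g\<in>Fset F f A. dF sn f g < \<epsilon> \<and> g b \<in> E"
proof -
  define h where "h z = poly (map_poly of_real (sym_annihilator A)) (z^2)" for z :: complex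
  have p1: "(\<lambda>z. h z ^ 2) \<in> F" and p2: "(\<lambda>z. z^2 * h z ^ 2) \<in> F" and "h holomorphic_on UNIV"
    using admissible_space_sym_annihilator[OF adm] unfolding h_def by blast+
  have "\<forall>a\<in>A. h a = 0" and "h b \<noteq> 0"
    using poly_sym_annihilator_square_eq_0_iff[OF \<open>finite A\<close>] \<open>b \<notin> sym_set A\<close>
    by (auto simp: h_def sym_set_def)
  obtain \<delta> where "\<delta> > 0" and small: "\<And>c1 c2. \<bar>c1\<bar> < \<delta> \<Longrightarrow> \<bar>c2\<bar> < \<delta> \<Longrightarrow>
      dF sn f (\<lambda>z. f z + of_real c1 * h z ^ 2 + of_real c2 * (z^2 * h z ^ 2)) < \<epsilon>"
    using dF_perturbation_small[OF adm \<open>f \<in> F\<close> p1 p2 \<open>\<epsilon> > 0\<close>] by blast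
  have "h b ^ 2 \<noteq> 0"
    using \<open>h b \<noteq> 0\<close> by simp
  moreover have "Re b = 0 \<or> Im b = 0 \<Longrightarrow> Im (f b) = 0 \<and> Im (h b ^ 2) = 0"
    using admissible_space_real_on_axes[OF adm] \<open>f \<in> F\<close> p1 by blast
  ultimately obtain c1 c2 where "\<bar>c1\<bar> < \<delta>" "\<bar>c2\<bar> < \<delta>"
    and "f b + (of_real c1 + of_real c2 * b^2) * h b ^ 2 \<in> E"
    using exists_small_coefficients_in_E[OF \<open>admissible_E E\<close> _ \<open>\<delta> > 0\<close>] by blast
  define g where "g z = f z + of_real c1 * h z ^ 2 + of_real c2 * (z^2 * h z ^ 2)" for z
  have "g \<in> Fset F f A"
    unfolding g_def
    by (rule perturbation_in_Fset[OF adm \<open>f \<in> F\<close> p1 p2 \<open>h holomorphic_on UNIV\<close> \<open>\<forall>a\<in>A. h a = 0\<close>])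
  moreover have "dF sn f g < \<epsilon>"
    unfolding g_def by (rule small) fact+
  moreover have "g b = f b + (of_real c1 + of_real c2 * b^2) * h b ^ 2"
    by (simp add: g_def algebra_simps)
  ultimately show ?thesis
    using \<open>f b + (of_real c1 + of_real c2 * b^2) * h b ^ 2 \<in> E\<close> by auto
qed

theorem lemma3p3:
  fixes F :: "(complex \<Rightarrow> complex) set"
    and sn :: "nat \<Rightarrow> (complex \<Rightarrow> complex) \<Rightarrow> real"
    and E :: "complex set" and f :: "complex \<Rightarrow> complex"
    and A :: "complex set" and b :: complex
  assumes "admissible_space F sn"
    and "admissible_E E"
    and "f \<in> F"
    and "finite A"
    and "A \<subseteq> f -` E \<or> b \<notin> sym_set A"
  shows "\<forall>\<epsilon>>0. \<exists>g\<in>Fset F f A. dF sn f g < \<epsilon> \<and> g b \<in> E"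
proof (intro allI impI)
  fix \<epsilon> :: real
  assume "\<epsilon> > 0"
  show "\<exists>g\<in>Fset F f A. dF sn f g < \<epsilon> \<and> g b \<in> E"
  proof (cases "b \<in> sym_set A")
    case True
    then have "f b \<in> E"
      using sym_set_subset_preimage[OF assms(1-3)] assms(5) by blast
    moreover have "f \<in> Fset F f A"
      using assms(3) by (simp add: Fset_def)
    ultimately show ?thesis
      using dF_self[OF assms(1,3)] \<open>\<epsilon> > 0\<close> by (intro bexI[of _ f]) auto
  next
    case False
    then show ?thesis
      using exists_perturbation_off_sym_set[OF assms(1-4) _ \<open>\<epsilon> > 0\<close>] by blast
  qed
qed

end
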